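(* Let $(X, A, \rightarrow)$ be a labelled transition system with finite state set $X$ and a distinguished silent action $\tau \in A$. For all $x, y \in X$: $x \mathrel{\#_b} y$ (i.e. $x$ and $y$ are branching apart) if and only if the configuration $[x,y]$ is winning for Spoiler in the branching bisimulation game.
   Context: Write $x \Longrightarrow x'$ if there is a (possibly empty) sequence of $\tau$-transitions from $x$ to $x'$, and $x \xrightarrow{(\alpha)} x'$ if either $x \xrightarrow{\alpha} x'$, or $\alpha = \tau$ and $x = x'$. A branching apartness relation is a symmetric relation $R \subseteq X \times X$ such that whenever $x \xrightarrow{\alpha} x'$ and for all $y', y''$ with $y \Longrightarrow y' \xrightarrow{(\alpha)} y''$ we have $x \mathrel R y'$ or $x' \mathrel R y''$, then $x \mathrel R y$. States are branching apart, $x \mathrel{\#_b} y$, iff they are related by every branching apartness relation. Branching bisimulation game: Spoiler configurations are $[x,y] \in X^2$ and $[x,x',y,y',y''] \in X^5$; Duplicator configurations are $\langle x,\alpha,x',y\rangle \in X \times A \times X \times X$. Spoiler can move from $[x,y]$ to $\langle x,\alpha,x',y\rangle$ if $x \xrightarrow{\alpha} x'$, and to $\langle y,\alpha,y',x\rangle$ if $y \xrightarrow{\alpha} y'$; and from $[x,x',y,y',y'']$ to $[x,y']$ or to $[x',y'']$. Duplicator can move from $\langle x,\alpha,x',y\rangle$ to $[x,x',y,y',y'']$ if $y \Longrightarrow y' \xrightarrow{(\alpha)} y''$. A play from $[x,y]$ is a finite or infinite sequence of configurations starting at $[x,y]$, each next one a move from the previous; it is maximal if infinite or no move is possible from its last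 configuration. Spoiler wins a finite maximal play iff its last configuration is a Duplicator configuration; all other maximal plays are won by Duplicator. A (positional) Spoiler strategy maps each Spoiler configuration to a Spoiler move from it; a play is consistent with it if all Spoiler moves in the play follow the strategy. $[x,y]$ is winning for Spoiler if there is a Spoiler strategy such that every maximal play from $[x,y]$ consistent with it is won by Spoiler. *)

theory Defs
  imports Main
begin

text \<open>The state set is the type 'x; finiteness is assumed in the theorem.\<close>

definition tau_steps :: "('x \<Rightarrow> 'a \<Rightarrow> 'x \<Rightarrow> bool) \<Rightarrow> 'a \<Rightarrow> 'x \<Rightarrow> 'x \<Rightarrow> bool" where
  "tau_steps step tau = (\<lambda>x y. step x tau y)\<^sup>*\<^sup>*"

definition opt_step :: "('x \<Rightarrow> 'a \<Rightarrow> 'x \<Rightarrow> bool) \<Rightarrow> 'a \<Rightarrow> 'x \<Rightarrow> 'a \<Rightarrow> 'x \<Rightarrow> bool" where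
  "opt_step step tau x a x' \<longleftrightarrow> step x a x' \<or> (a = tau \<and> x = x')"

definition branching_apartness :: "('x \<Rightarrow> 'a \<Rightarrow> 'x \<Rightarrow> bool) \<Rightarrow> 'a \<Rightarrow> ('x \<Rightarrow> 'x \<Rightarrow> bool) \<Rightarrow> bool" where
  "branching_apartness step tau R \<longleftrightarrow>
     symp R \<and>
     (\<forall>x y a x'. step x a x' \<and>
        (\<forall>y' y''. tau_steps step tau y y' \<and> opt_step step tau y' a y'' \<longrightarrow> R x y' \<or> R x' y'')
        \<longrightarrow> R x y)"

definition branching_apart :: "('x \<Rightarrow> 'a \<Rightarrow> 'x \<Rightarrow> bool) \<Rightarrow> 'a \<Rightarrow> 'x \<Rightarrow> 'x \<Rightarrow> bool" where
  "branching_apart step tau x y \<longleftrightarrow> (\<forall>R. branching_apartness step tau R \<longrightarrow> R x y)"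

datatype ('x, 'a) conf =
    SP2 'x 'x                 (* [x,y] *)
  | SP5 'x 'x 'x 'x 'x
  | DUP 'x 'a 'x 'x

fun spoiler_conf :: "('x, 'a) conf \<Rightarrow> bool" where
  "spoiler_conf (DUP _ _ _ _) = False"
| "spoiler_conf _ = True"

fun game_move :: "('x \<Rightarrow> 'a \<Rightarrow> 'x \<Rightarrow> bool) \<Rightarrow> 'a \<Rightarrow> ('x, 'a) conf \<Rightarrow> ('x, 'a) conf \<Rightarrow> bool" where
  "game_move step tau (SP2 x y) c' \<longleftrightarrow>
     (\<exists>a x'. step x a x' \<and> c' = DUP x a x' y) \<or> (\<exists>a y'. step y a y' \<and> c' = DUP y a y' x)"
| "game_move step tau (SP5 x x' y y' y'') c' \<longleftrightarrow> c' = SP2 x y' \<or> c' = SP2 x' y''"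
| "game_move step tau (DUP x a x' y) c' \<longleftrightarrow>
     (\<exists>y' y''. tau_steps step tau y y' \<and> opt_step step tau y' a y'' \<and> c' = SP5 x x' y y' y'')"

definition spoiler_strategy :: "('x \<Rightarrow> 'a \<Rightarrow> 'x \<Rightarrow> bool) \<Rightarrow> 'a \<Rightarrow> (('x, 'a) conf \<Rightarrow> ('x, 'a) conf) \<Rightarrow> bool" where
  "spoiler_strategy step tau \<sigma> \<longleftrightarrow>
     (\<forall>c. spoiler_conf c \<and> (\<exists>c'. game_move step tau c c') \<longrightarrow> game_move step tau c (\<sigma> c))"

definition consistent_step :: "('x \<Rightarrow> 'a \<Rightarrow> 'x \<Rightarrow> bool) \<Rightarrow> 'a \<Rightarrow> (('x, 'a) conf \<Rightarrow> ('x, 'a) conf)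
    \<Rightarrow> ('x, 'a) conf \<Rightarrow> ('x, 'a) conf \<Rightarrow> bool" where
  "consistent_step step tau \<sigma> c c' \<longleftrightarrow> game_move step tau c c' \<and> (spoiler_conf c \<longrightarrow> c' = \<sigma> c)"

definition spoiler_wins_from ::
  "('x \<Rightarrow> 'a \<Rightarrow> 'x \<Rightarrow> bool) \<Rightarrow> 'a \<Rightarrow> (('x, 'a) conf \<Rightarrow> ('x, 'a) conf) \<Rightarrow> ('x, 'a) conf \<Rightarrow> bool" where
  "spoiler_wins_from step tau \<sigma> c0 \<longleftrightarrow>
     \<comment> \<open>every finite maximal consistent play is won by Spoiler\<close>
     (\<forall>p. p \<noteq> [] \<and> hd p = c0
          \<and> (\<forall>i. Suc i < length p \<longrightarrow> consistent_step step tau \<sigma> (p ! i) (p ! Suc i))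
          \<and> (\<nexists>c'. game_move step tau (last p) c')
          \<longrightarrow> \<not> spoiler_conf (last p))
     \<and> \<comment> \<open>there is no infinite consistent play (those are won by Duplicator)\<close>
     (\<nexists>f. f 0 = c0 \<and> (\<forall>i. consistent_step step tau \<sigma> (f i) (f (Suc i))))"

definition spoiler_winning :: "('x \<Rightarrow> 'a \<Rightarrow> 'x \<Rightarrow> bool) \<Rightarrow> 'a \<Rightarrow> ('x, 'a) conf \<Rightarrow> bool" where
  "spoiler_winning step tau c \<longleftrightarrow>
     (\<exists>\<sigma>. spoiler_strategy step tau \<sigma> \<and> spoiler_wins_from step tau \<sigma> c)"

end

theory Submission
  imports Defs
begin

(* Both sides coincide with Spoiler's attractor on the pairs [x,y]: the configurations from which
   Spoiler can force, within a bounded number of rounds, a position where Duplicator cannot answer.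
   Unfolding three moves of the attractor at [x,y] is exactly the closure rule of branching
   apartness, so every apartness contains the attractor on pairs; conversely that relation is
   itself an apartness, because Duplicator has only finitely many answers (X is finite), whose
   ranks therefore have a common bound. A strategy that always lowers the rank wins from the
   attractor, while against any strategy Duplicator can stay outside the attractor, which yields
   either an infinite play or a finite one ending with Spoiler stuck. *)

lemma infinite_chain_or_path_to:
  fixes r :: "'c \<Rightarrow> 'c \<Rightarrow> bool"
  assumes start: "B c0"
    and continue: "\<And>c. B c \<Longrightarrow> \<not> S c \<Longrightarrow> \<exists>c'. r c c' \<and> B c'"
  shows "(\<exists>f. f 0 = c0 \<and> (\<forall>i. r (f i) (f (Suc i))))
    \<or> (\<exists>p. p \<noteq> [] \<and> hd p = c0 \<and> successively r p \<and> S (last p))"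
proof (rule disjCI)
  assume no_path: "\<not> (\<exists>p. p \<noteq> [] \<and> hd p = c0 \<and> successively r p \<and> S (last p))"
  define reachable where
    "reachable c \<longleftrightarrow> B c \<and> (\<exists>p. p \<noteq> [] \<and> hd p = c0 \<and> successively r p \<and> last p = c)" for c
  have "reachable c0"
    unfolding reachable_def using start by (intro conjI exI[of _ "[c0]"]) auto
  moreover have "\<exists>c'. r c c' \<and> reachable c'" if "reachable c" for c
  proof -
    from that obtain p where p: "B c" "p \<noteq> []" "hd p = c0" "successively r p" "last p = c"
      unfolding reachable_def by blast
    with no_path have "\<not> S c" by blast
    with continue p(1) obtain c' where "r c c'" "B c'" by blast
    with p have "reachable c'"
      unfolding reachable_def by (intro conjI exI[of _ "p @ [c']"]) (auto simp: successively_append_iff)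
    with \<open>r c c'\<close> show ?thesis by blast
  qed
  ultimately obtain f where "\<forall>n. (reachable (f n) \<and> (n = 0 \<longrightarrow> f n = c0)) \<and> r (f n) (f (Suc n))"
    using dependent_nat_choice[where P = "\<lambda>n c. reachable c \<and> (n = 0 \<longrightarrow> c = c0)"
        and Q = "\<lambda>_ c c'. r c c'"] by blast
  then show "\<exists>f. f 0 = c0 \<and> (\<forall>i. r (f i) (f (Suc i)))" by blast
qed

context
  fixes step :: "'x \<Rightarrow> 'a \<Rightarrow> 'x \<Rightarrow> bool" and tau :: 'a
begin

fun attractor :: "nat \<Rightarrow> ('x, 'a) conf \<Rightarrow> bool" where
  "attractor 0 c = False"
| "attractor (Suc n) c =
     (if spoiler_conf c then \<exists>c'. game_move step tau c c' \<and> attractor n c'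
      else \<forall>c'. game_move step tau c c' \<longrightarrow> attractor n c')"

definition in_attractor :: "('x, 'a) conf \<Rightarrow> bool" where
  "in_attractor c \<longleftrightarrow> (\<exists>n. attractor n c)"

lemma attractor_Suc: "attractor n c \<Longrightarrow> attractor (Suc n) c"
  by (induction n arbitrary: c) (auto split: if_splits)

lemma attractor_mono:
  assumes "attractor n c" "n \<le> m" shows "attractor m c"
  using assms(2,1) by (induction m rule: dec_induct) (auto intro: attractor_Suc simp del: attractor.simps)

lemma attractor_stuck_spoiler:
  "spoiler_conf c \<Longrightarrow> \<nexists>c'. game_move step tau c c' \<Longrightarrow> \<not> attractor n c"
  by (cases n) auto

lemma game_move_SP2_commute: "game_move step tau (SP2 x y) = game_move step tau (SP2 y x)"
  by auto

lemma attractor_SP2_commute: "attractor n (SP2 x y) = attractor n (SP2 y x)"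
  by (cases n) (simp_all only: attractor.simps spoiler_conf.simps game_move_SP2_commute)

lemma in_attractor_spoiler_move:
  "spoiler_conf c \<Longrightarrow> game_move step tau c c' \<Longrightarrow> in_attractor c' \<Longrightarrow> in_attractor c"
  unfolding in_attractor_def by (metis attractor.simps(2))

lemma finite_game_moves_DUP:
  assumes "finite (UNIV :: 'x set)"
  shows "finite {c'. game_move step tau (DUP x a x' y) c'}"
proof (rule finite_subset)
  show "{c'. game_move step tau (DUP x a x' y) c'} \<subseteq> (\<lambda>(y', y''). SP5 x x' y y' y'') ` UNIV"
    by auto
  show "finite ((\<lambda>(y', y''). SP5 x x' y y' y'') ` (UNIV :: ('x \<times> 'x) set))"
    using assms by (simp add: finite_Prod_UNIV)
qed

lemma in_attractor_DUP:
  assumes "finite (UNIV :: 'x set)"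
    and "\<forall>c'. game_move step tau (DUP x a x' y) c' \<longrightarrow> in_attractor c'"
  shows "in_attractor (DUP x a x' y)"
proof -
  let ?S = "{c'. game_move step tau (DUP x a x' y) c'}"
  have "\<forall>c'\<in>?S. eventually (\<lambda>n. attractor n c') sequentially"
    using assms(2) attractor_mono unfolding in_attractor_def eventually_sequentially by blast
  then have "eventually (\<lambda>n. \<forall>c'\<in>?S. attractor n c') sequentially"
    by (rule eventually_ball_finite[OF finite_game_moves_DUP[OF assms(1)]])
  then obtain n where "\<forall>c'\<in>?S. attractor n c'"
    by (auto simp: eventually_sequentially)
  then have "attractor (Suc n) (DUP x a x' y)" by simp
  then show ?thesis unfolding in_attractor_def by blast
qed

(* Outside the attractor the rank condition is vacuous, so there the strategy picks an arbitrary move. *)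
definition attractor_strategy :: "('x, 'a) conf \<Rightarrow> ('x, 'a) conf" where
  "attractor_strategy c =
     (SOME c'. game_move step tau c c' \<and> (\<forall>n. attractor (Suc n) c \<longrightarrow> attractor n c'))"

lemma rank_decreasing_move_exists:
  assumes "spoiler_conf c" "game_move step tau c c0"
  shows "\<exists>c'. game_move step tau c c' \<and> (\<forall>n. attractor (Suc n) c \<longrightarrow> attractor n c')"
proof (cases "\<exists>n. attractor (Suc n) c")
  case True
  define m where "m = (LEAST n. attractor (Suc n) c)"
  have "attractor (Suc m) c" unfolding m_def using True by (rule LeastI_ex)
  with assms(1) obtain c' where "game_move step tau c c'" "attractor m c'" by auto
  moreover have "m \<le> n" if "attractor (Suc n) c" for n
    unfolding m_def using that by (rule Least_le)
  ultimately show ?thesis using attractor_mono by blast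
next
  case False
  with assms(2) show ?thesis by blast
qed

lemma attractor_strategy_move:
  assumes "spoiler_conf c" "game_move step tau c c0"
  shows "game_move step tau c (attractor_strategy c)"
    and "attractor (Suc n) c \<Longrightarrow> attractor n (attractor_strategy c)"
  using someI_ex[OF rank_decreasing_move_exists[OF assms]]
  unfolding attractor_strategy_def by blast+

lemma spoiler_strategy_attractor_strategy: "spoiler_strategy step tau attractor_strategy"
  unfolding spoiler_strategy_def using attractor_strategy_move(1) by blast

lemma attractor_consistent_step:
  assumes "attractor (Suc n) c" "consistent_step step tau attractor_strategy c c'"
  shows "attractor n c'"
proof (cases "spoiler_conf c")
  case True
  with assms(2) have "c' = attractor_strategy c" "game_move step tau c c'"
    unfolding consistent_step_def by auto
  with True assms(1) show ?thesis using attractor_strategy_move(2) by blast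
next
  case False
  with assms show ?thesis unfolding consistent_step_def by simp
qed

lemma attractor_along_play:
  assumes "attractor n (g 0)"
    and "\<forall>j<i. consistent_step step tau attractor_strategy (g j) (g (Suc j))"
  shows "attractor (n - i) (g i)"
  using assms(2)
proof (induction i)
  case 0
  with assms(1) show ?case by simp
next
  case (Suc i)
  then have "attractor (n - i) (g i)" by simp
  moreover from this obtain m where "n - i = Suc m" by (cases "n - i") auto
  ultimately have "attractor m (g (Suc i))"
    using Suc.prems attractor_consistent_step by auto
  with \<open>n - i = Suc m\<close> show ?case by (simp add: diff_Suc)
qed

lemma attractor_strategy_wins:
  assumes "attractor n c"
  shows "spoiler_wins_from step tau attractor_strategy c"
  unfolding spoiler_wins_from_def
proof (intro conjI allI impI notI)
  fix p
  assume play: "p \<noteq> [] \<and> hd p = c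
      \<and> (\<forall>i. Suc i < length p \<longrightarrow> consistent_step step tau attractor_strategy (p ! i) (p ! Suc i))
      \<and> (\<nexists>c'. game_move step tau (last p) c')"
    and "spoiler_conf (last p)"
  have "attractor (n - (length p - 1)) (p ! (length p - 1))"
    using assms play by (intro attractor_along_play) (auto simp: hd_conv_nth)
  with play \<open>spoiler_conf (last p)\<close> show False
    using attractor_stuck_spoiler by (metis last_conv_nth)
next
  assume "\<exists>f. f 0 = c \<and> (\<forall>i. consistent_step step tau attractor_strategy (f i) (f (Suc i)))"
  then obtain f where "f 0 = c" "\<forall>i. consistent_step step tau attractor_strategy (f i) (f (Suc i))"
    by blast
  with assms have "attractor (n - n) (f n)" by (intro attractor_along_play) auto
  then show False by simp
qed

lemma attractor_SP2_in_apartness: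
  assumes R: "branching_apartness step tau R"
  shows "attractor n (SP2 x y) \<Longrightarrow> R x y"
proof (induction n arbitrary: x y rule: less_induct)
  case (less n)
  then obtain m where n: "n = Suc m" by (cases n) auto
  have side: "R u v" if u_step: "step u a u'" and dup: "attractor m (DUP u a u' v)" for u v a u'
  proof -
    obtain k where m: "m = Suc k" using dup by (cases m) auto
    have "R u y' \<or> R u' y''" if "tau_steps step tau v y'" "opt_step step tau y' a y''" for y' y''
    proof -
      have "attractor k (SP5 u u' v y' y'')" using dup m that by auto
      then obtain l where "k = Suc l" "attractor l (SP2 u y') \<or> attractor l (SP2 u' y'')"
        by (cases k) auto
      moreover have "l < n" using n m \<open>k = Suc l\<close> by simp
      ultimately show ?thesis using less.IH by blast
    qed
    with R u_step show ?thesis unfolding branching_apartness_def by blast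
  qed
  from less.prems n consider
      a x' where "step x a x'" "attractor m (DUP x a x' y)"
    | a y' where "step y a y'" "attractor m (DUP y a y' x)"
    by auto
  then show ?case
  proof cases
    case 1
    then show ?thesis by (rule side)
  next
    case 2
    then have "R y x" by (rule side)
    with R show ?thesis unfolding branching_apartness_def by (blast dest: sympD)
  qed
qed

lemma branching_apartness_in_attractor:
  assumes "finite (UNIV :: 'x set)"
  shows "branching_apartness step tau (\<lambda>x y. in_attractor (SP2 x y))"
  unfolding branching_apartness_def
proof (intro conjI allI impI)
  show "symp (\<lambda>x y. in_attractor (SP2 x y))"
    using attractor_SP2_commute by (auto simp: symp_def in_attractor_def)
next
  fix x y a x'
  assume closed: "step x a x' \<and> (\<forall>y' y''. tau_steps step tau y y' \<and> opt_step step tau y' a y''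
      \<longrightarrow> in_attractor (SP2 x y') \<or> in_attractor (SP2 x' y''))"
  have "in_attractor c'" if "game_move step tau (DUP x a x' y) c'" for c'
  proof -
    from that obtain y' y'' where
      "tau_steps step tau y y'" "opt_step step tau y' a y''" and c': "c' = SP5 x x' y y' y''"
      by auto
    with closed have "in_attractor (SP2 x y') \<or> in_attractor (SP2 x' y'')" by blast
    moreover have "spoiler_conf c'" "game_move step tau c' (SP2 x y')" "game_move step tau c' (SP2 x' y'')"
      unfolding c' by simp_all
    ultimately show ?thesis using in_attractor_spoiler_move by blast
  qed
  then have "in_attractor (DUP x a x' y)" by (intro in_attractor_DUP[OF assms]) auto
  moreover from closed have "game_move step tau (SP2 x y) (DUP x a x' y)" by auto
  ultimately show "in_attractor (SP2 x y)"
    by (meson in_attractor_spoiler_move spoiler_conf.simps)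
qed

lemma outside_attractor_move:
  assumes fin: "finite (UNIV :: 'x set)" and \<sigma>: "spoiler_strategy step tau \<sigma>"
    and "\<not> in_attractor c" "\<not> (spoiler_conf c \<and> (\<nexists>c'. game_move step tau c c'))"
  shows "\<exists>c'. consistent_step step tau \<sigma> c c' \<and> \<not> in_attractor c'"
proof (cases "spoiler_conf c")
  case True
  with \<sigma> assms(4) have "game_move step tau c (\<sigma> c)" unfolding spoiler_strategy_def by blast
  with True assms(3) show ?thesis
    unfolding consistent_step_def by (blast intro: in_attractor_spoiler_move)
next
  case False
  then obtain x a x' y where "c = DUP x a x' y" by (cases c) auto
  with assms(3) obtain c' where "game_move step tau c c'" "\<not> in_attractor c'"
    using in_attractor_DUP[OF fin] by blast
  with False show ?thesis unfolding consistent_step_def by blast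
qed

lemma spoiler_wins_imp_in_attractor:
  assumes fin: "finite (UNIV :: 'x set)" and \<sigma>: "spoiler_strategy step tau \<sigma>"
    and wins: "spoiler_wins_from step tau \<sigma> c"
  shows "in_attractor c"
proof (rule ccontr)
  assume "\<not> in_attractor c"
  from infinite_chain_or_path_to[where B = "\<lambda>c. \<not> in_attractor c"
      and S = "\<lambda>c. spoiler_conf c \<and> (\<nexists>c'. game_move step tau c c')",
      OF this outside_attractor_move[OF fin \<sigma>]]
  show False
  proof
    assume "\<exists>f. f 0 = c \<and> (\<forall>i. consistent_step step tau \<sigma> (f i) (f (Suc i)))"
    with wins show False unfolding spoiler_wins_from_def by blast
  next
    assume "\<exists>p. p \<noteq> [] \<and> hd p = c \<and> successively (consistent_step step tau \<sigma>) p
      \<and> spoiler_conf (last p) \<and> (\<nexists>c'. game_move step tau (last p) c')"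
    then obtain p where "p \<noteq> []" "hd p = c" "successively (consistent_step step tau \<sigma>) p"
      "spoiler_conf (last p)" "\<nexists>c'. game_move step tau (last p) c'"
      by blast
    with wins show False unfolding spoiler_wins_from_def successively_conv_nth by blast
  qed
qed

end

theorem theorem4:
  fixes step :: "'x \<Rightarrow> 'a \<Rightarrow> 'x \<Rightarrow> bool" and tau :: 'a and x y :: 'x
  assumes "finite (UNIV :: 'x set)"
  shows "branching_apart step tau x y \<longleftrightarrow> spoiler_winning step tau (SP2 x y)"
proof
  assume "branching_apart step tau x y"
  moreover have "branching_apartness step tau (\<lambda>x y. in_attractor step tau (SP2 x y))"
    using assms by (rule branching_apartness_in_attractor)
  ultimately have "in_attractor step tau (SP2 x y)" unfolding branching_apart_def by blast
  then obtain n where "attractor step tau n (SP2 x y)" unfolding in_attractor_def ..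
  then show "spoiler_winning step tau (SP2 x y)"
    unfolding spoiler_winning_def
    by (intro exI[of _ "attractor_strategy step tau"] conjI spoiler_strategy_attractor_strategy
        attractor_strategy_wins)
next
  assume "spoiler_winning step tau (SP2 x y)"
  then obtain \<sigma> where "spoiler_strategy step tau \<sigma>" "spoiler_wins_from step tau \<sigma> (SP2 x y)"
    unfolding spoiler_winning_def by blast
  then have "in_attractor step tau (SP2 x y)" by (rule spoiler_wins_imp_in_attractor[OF assms])
  then obtain n where n: "attractor step tau n (SP2 x y)" unfolding in_attractor_def ..
  show "branching_apart step tau x y"
    unfolding branching_apart_def using attractor_SP2_in_apartness[OF _ n] by blast
qed

end
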